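(* Let $G=(V,E)$ be $(2,2)$-$C_i$-tight and let $v\in V$ have degree 3 with $N(v)\cap N(v')=\emptyset$. Then either $G[N(v)\cup\{v\}]\cong K_4$, or there exist $x,y\in N(v)$ with $xy\notin E$ such that $G-\{v,v'\}+\{xy,x'y'\}$ is $(2,2)$-$C_i$-tight.
   Context: A $\mathbb{Z}_2$-symmetric graph is a finite simple graph $G=(V,E)$ with an automorphism $\theta$, $\theta^2=\mathrm{id}$; write $v'=\theta(v)$. A vertex is fixed if $v'=v$; an edge $uv$ is fixed if $\{u',v'\}=\{u,v\}$. $G$ is $(2,2)$-sparse if every subgraph $(V',E')$ with $V'\ne\emptyset$ has $|E'|\le2|V'|-2$, $(2,2)$-tight if also $|E|=2|V|-2$. $G$ is $(2,2)$-$C_i$-tight if it is $(2,2)$-tight and $\theta$ fixes no vertex and no edge. $N(v)$ is the set of neighbours of $v$; $G-\{v,v'\}+\{xy,x'y'\}$ denotes deleting $v,v'$ and adding edges $xy,x'y'$, with the restricted involution. *)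

theory Defs
  imports Main
begin

definition simple_graph :: "'a set \<Rightarrow> 'a set set \<Rightarrow> bool" where
  "simple_graph V E \<longleftrightarrow> finite V \<and>
     (\<forall>e\<in>E. \<exists>u v. u \<noteq> v \<and> u \<in> V \<and> v \<in> V \<and> e = {u, v})"

definition z2_symmetric :: "'a set \<Rightarrow> 'a set set \<Rightarrow> ('a \<Rightarrow> 'a) \<Rightarrow> bool" where
  "z2_symmetric V E \<theta> \<longleftrightarrow> simple_graph V E \<and>
     (\<forall>v\<in>V. \<theta> v \<in> V \<and> \<theta> (\<theta> v) = v) \<and>
     (\<forall>u\<in>V. \<forall>v\<in>V. {u, v} \<in> E \<longleftrightarrow> {\<theta> u, \<theta> v} \<in> E)"

definition sparse22 :: "'a set \<Rightarrow> 'a set set \<Rightarrow> bool" where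
  "sparse22 V E \<longleftrightarrow> (\<forall>V' E'. V' \<subseteq> V \<and> V' \<noteq> {} \<and> E' \<subseteq> E \<and> (\<forall>e\<in>E'. e \<subseteq> V')
       \<longrightarrow> int (card E') \<le> 2 * int (card V') - 2)"

definition tight22 :: "'a set \<Rightarrow> 'a set set \<Rightarrow> bool" where
  "tight22 V E \<longleftrightarrow> sparse22 V E \<and> int (card E) = 2 * int (card V) - 2"

definition Ci_tight22 :: "'a set \<Rightarrow> 'a set set \<Rightarrow> ('a \<Rightarrow> 'a) \<Rightarrow> bool" where
  "Ci_tight22 V E \<theta> \<longleftrightarrow> z2_symmetric V E \<theta> \<and> tight22 V E \<and>
     (\<forall>v\<in>V. \<theta> v \<noteq> v) \<and> (\<forall>e\<in>E. \<theta> ` e \<noteq> e)"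

definition nbhd :: "'a set \<Rightarrow> 'a set set \<Rightarrow> 'a \<Rightarrow> 'a set" where
  "nbhd V E v = {u \<in> V. {v, u} \<in> E}"

definition induced_K4 :: "'a set set \<Rightarrow> 'a set \<Rightarrow> bool" where
  "induced_K4 E S \<longleftrightarrow> card S = 4 \<and> (\<forall>a\<in>S. \<forall>b\<in>S. a \<noteq> b \<longrightarrow> {a, b} \<in> E)"

text \<open>G - {v,v'} + {xy, x'y'} (vertex set and edge set; involution is restricted).\<close>
definition red_V :: "'a set \<Rightarrow> ('a \<Rightarrow> 'a) \<Rightarrow> 'a \<Rightarrow> 'a set" where
  "red_V V \<theta> v = V - {v, \<theta> v}"

definition red_E :: "'a set set \<Rightarrow> ('a \<Rightarrow> 'a) \<Rightarrow> 'a \<Rightarrow> 'a \<Rightarrow> 'a \<Rightarrow> 'a set set" where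
  "red_E E \<theta> v x y = {e \<in> E. v \<notin> e \<and> \<theta> v \<notin> e} \<union> {{x, y}, {\<theta> x, \<theta> y}}"

end

theory Submission
  imports Defs "HOL-Library.Disjoint_Sets" "HOL-Library.Z2"
begin

text \<open>
  If the reduction \<open>G - {v,v'} + {xy, x'y'}\<close> is not \<open>(2,2)\<close>-\<open>C\<^sub>i\<close>-tight, then, since edge
  count and symmetry are automatic, it violates sparsity, and some tight set of \<open>G\<close> avoiding \<open>v\<close>
  contains both \<open>x\<close> and \<open>y\<close>. Indeed, a violating set \<open>X\<close> spans \<open>xy\<close> or \<open>x'y'\<close>. If it spans only
  one of them, \<open>X\<close> or \<open>\<theta>(X)\<close> is tight. If it spans both, \<open>X\<close> is one edge short of tight, and
  either \<open>X \<inter> \<theta>(X)\<close> is tight or, by supermodularity of the induced edge count, \<open>X \<union> \<theta>(X)\<close> is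
  one edge short of tight; being \<open>\<theta>\<close>-invariant with \<open>\<theta>\<close> fixing no edge, it spans an even number of
  edges and hence is tight.

  If this happens for every non-adjacent pair of neighbours of \<open>v\<close> and \<open>N(v)\<close> is not a clique,
  then, as tight sets sharing a vertex have a tight union and a vertex with two neighbours in a
  tight set can be added to it, some tight set avoiding \<open>v\<close> contains all three neighbours of \<open>v\<close>;
  adding \<open>v\<close> then violates sparsity.
\<close>

definition induced_edges :: "'a set set \<Rightarrow> 'a set \<Rightarrow> 'a set set" where
  "induced_edges E X = {e \<in> E. e \<subseteq> X}"

definition tight_set :: "'a set \<Rightarrow> 'a set set \<Rightarrow> 'a set \<Rightarrow> bool" where
  "tight_set V E T \<longleftrightarrow> T \<subseteq> V \<and> T \<noteq> {} \<and> int (card (induced_edges E T)) = 2 * int (card T) - 2"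

lemma induced_edges_insert:
  "induced_edges (insert e F) X = (if e \<subseteq> X then insert e (induced_edges F X) else induced_edges F X)"
  unfolding induced_edges_def by auto

lemma even_card_if_fixpoint_free_involution:
  assumes "finite A" "\<And>a. a \<in> A \<Longrightarrow> g a \<in> A" "\<And>a. a \<in> A \<Longrightarrow> g (g a) = a"
    "\<And>a. a \<in> A \<Longrightarrow> g a \<noteq> a"
  shows "even (card A)"
proof -
  have "(\<Sum>a\<in>A. 1 :: bit) = 0"
    by (rule sum_involution_eq_0[where h = g]) (use assms in auto)
  then have "even (of_nat (card A) :: bit)"
    by simp
  then show ?thesis
    by (simp only: even_of_nat)
qed

locale graph =
  fixes V :: "'a set" and E :: "'a set set"
  assumes simple: "simple_graph V E"
begin

lemma finite_V: "finite V"
  using simple unfolding simple_graph_def by blast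

lemma edgeE:
  assumes "e \<in> E"
  obtains a b where "a \<noteq> b" "a \<in> V" "b \<in> V" "e = {a, b}"
  using simple assms unfolding simple_graph_def by blast

lemma edge_subset: "e \<in> E \<Longrightarrow> e \<subseteq> V"
  by (blast elim: edgeE)

lemma finite_E: "finite E"
  using finite_V edge_subset by (meson PowI finite_Pow_iff finite_subset subsetI)

lemma finite_induced_edges: "finite (induced_edges E X)"
  unfolding induced_edges_def using finite_E by simp

lemma nbhd_subset: "nbhd V E w \<subseteq> V"
  unfolding nbhd_def by blast

lemma not_in_own_nbhd: "w \<notin> nbhd V E w"
  unfolding nbhd_def by (auto elim: edgeE simp: doubleton_eq_iff)

lemma card_incident_edges: "card {e \<in> E. w \<in> e} = card (nbhd V E w)"
proof -
  have "{e \<in> E. w \<in> e} = (\<lambda>u. {w, u}) ` nbhd V E w"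
  proof
    show "{e \<in> E. w \<in> e} \<subseteq> (\<lambda>u. {w, u}) ` nbhd V E w"
    proof
      fix e assume "e \<in> {e \<in> E. w \<in> e}"
      then have "e \<in> E" "w \<in> e"
        by auto
      then obtain a b where "a \<in> V" "b \<in> V" "e = {a, b}"
        by (blast elim: edgeE)
      then have "e = {w, if a = w then b else a}" "(if a = w then b else a) \<in> V"
        using \<open>w \<in> e\<close> by auto
      then show "e \<in> (\<lambda>u. {w, u}) ` nbhd V E w"
        using \<open>e \<in> E\<close> unfolding nbhd_def by blast
    qed
  qed (auto simp: nbhd_def)
  moreover have "inj_on (\<lambda>u. {w, u}) (nbhd V E w)"
    using not_in_own_nbhd by (auto intro!: inj_onI simp: doubleton_eq_iff)
  ultimately show ?thesis
    by (simp add: card_image)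
qed

lemma card_induced_edges_Un_Int:
  "card (induced_edges E X) + card (induced_edges E Y)
     \<le> card (induced_edges E (X \<union> Y)) + card (induced_edges E (X \<inter> Y))"
proof -
  have "induced_edges E (X \<inter> Y) = induced_edges E X \<inter> induced_edges E Y"
    unfolding induced_edges_def by auto
  then have "card (induced_edges E X) + card (induced_edges E Y)
      = card (induced_edges E X \<union> induced_edges E Y) + card (induced_edges E (X \<inter> Y))"
    using card_Un_Int[OF finite_induced_edges finite_induced_edges] by simp
  moreover have "induced_edges E X \<union> induced_edges E Y \<subseteq> induced_edges E (X \<union> Y)"
    unfolding induced_edges_def by auto
  then have "card (induced_edges E X \<union> induced_edges E Y) \<le> card (induced_edges E (X \<union> Y))"
    by (rule card_mono[OF finite_induced_edges])
  ultimately show ?thesis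
    by linarith
qed

lemma card_induced_edges_insert:
  assumes "u \<notin> X"
  shows "card (induced_edges E X) + card (X \<inter> nbhd V E u) \<le> card (induced_edges E (insert u X))"
proof -
  let ?S = "X \<inter> nbhd V E u"
  have "finite ?S"
    using finite_V nbhd_subset by (meson finite_Int finite_subset)
  moreover have "inj_on (\<lambda>s. {u, s}) ?S"
    using assms by (auto intro!: inj_onI simp: doubleton_eq_iff)
  moreover have "induced_edges E X \<inter> (\<lambda>s. {u, s}) ` ?S = {}"
    unfolding induced_edges_def using assms by auto
  ultimately have "card (induced_edges E X \<union> (\<lambda>s. {u, s}) ` ?S) = card (induced_edges E X) + card ?S"
    by (simp add: card_Un_disjoint finite_induced_edges card_image)
  moreover have "induced_edges E X \<union> (\<lambda>s. {u, s}) ` ?S \<subseteq> induced_edges E (insert u X)"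
    unfolding induced_edges_def nbhd_def using edge_subset by auto
  ultimately show ?thesis
    by (metis card_mono finite_induced_edges)
qed

end

locale sparse22_graph = graph +
  assumes sparse: "sparse22 V E"
begin

lemma card_induced_edges_le:
  assumes "X \<subseteq> V" "X \<noteq> {}"
  shows "int (card (induced_edges E X)) \<le> 2 * int (card X) - 2"
proof -
  have "\<forall>E'. E' \<subseteq> E \<and> (\<forall>e\<in>E'. e \<subseteq> X) \<longrightarrow> int (card E') \<le> 2 * int (card X) - 2"
    using sparse assms unfolding sparse22_def by blast
  then show ?thesis
    by (rule allE[where x = "induced_edges E X"]) (auto simp: induced_edges_def)
qed

lemma tight_setI:
  assumes "X \<subseteq> V" "X \<noteq> {}" "2 * int (card X) - 2 \<le> int (card (induced_edges E X))"
  shows "tight_set V E X"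
  using assms card_induced_edges_le[OF assms(1,2)] unfolding tight_set_def by auto

lemma tight_set_Un:
  assumes "tight_set V E T" "tight_set V E T'" "T \<inter> T' \<noteq> {}"
  shows "tight_set V E (T \<union> T')"
proof (rule tight_setI)
  have "T \<subseteq> V" "T' \<subseteq> V"
    using assms unfolding tight_set_def by auto
  then have "finite T" "finite T'"
    using finite_subset[OF _ finite_V] by auto
  then have "card T + card T' = card (T \<union> T') + card (T \<inter> T')"
    by (rule card_Un_Int)
  moreover have "int (card (induced_edges E (T \<inter> T'))) \<le> 2 * int (card (T \<inter> T')) - 2"
    using card_induced_edges_le[of "T \<inter> T'"] \<open>T \<subseteq> V\<close> assms(3) by auto
  moreover have "int (card (induced_edges E T)) = 2 * int (card T) - 2"
    "int (card (induced_edges E T')) = 2 * int (card T') - 2"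
    using assms(1,2) unfolding tight_set_def by auto
  moreover note card_induced_edges_Un_Int[of T T']
  ultimately show "2 * int (card (T \<union> T')) - 2 \<le> int (card (induced_edges E (T \<union> T')))"
    by linarith
qed (use assms in \<open>auto simp: tight_set_def\<close>)

lemma tight_set_insert:
  assumes "tight_set V E T" "u \<in> V" "u \<notin> T" "2 \<le> card (T \<inter> nbhd V E u)"
  shows "tight_set V E (insert u T)"
proof (rule tight_setI)
  have "finite T"
    using assms(1) finite_V unfolding tight_set_def by (meson finite_subset)
  then show "2 * int (card (insert u T)) - 2 \<le> int (card (induced_edges E (insert u T)))"
    using card_induced_edges_insert[OF assms(3)] assms(1,3,4) unfolding tight_set_def by simp
qed (use assms in \<open>auto simp: tight_set_def\<close>)

lemma card_nbhd_inter_tight_set: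
  assumes "tight_set V E T" "u \<in> V" "u \<notin> T"
  shows "card (T \<inter> nbhd V E u) \<le> 2"
proof -
  have "T \<subseteq> V" "finite T"
    using assms(1) finite_V unfolding tight_set_def by (auto intro: finite_subset)
  then have "int (card (induced_edges E (insert u T))) \<le> 2 * int (card T) + 2 - 2"
    using card_induced_edges_le[of "insert u T"] assms(2,3) by simp
  then show ?thesis
    using card_induced_edges_insert[OF assms(3)] assms(1) unfolding tight_set_def by simp
qed

context
  fixes v :: 'a
  assumes degree3: "card (nbhd V E v) = 3"
    and nonedges_tight:
      "\<And>x y. x \<in> nbhd V E v \<Longrightarrow> y \<in> nbhd V E v \<Longrightarrow> x \<noteq> y \<Longrightarrow> {x, y} \<notin> E \<Longrightarrow>
         \<exists>T. tight_set V E T \<and> x \<in> T \<and> y \<in> T \<and> v \<notin> T"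
begin

lemma tight_set_containing_nbhd:
  assumes "p \<in> nbhd V E v" "q \<in> nbhd V E v" "p \<noteq> q" "{p, q} \<notin> E"
  shows "\<exists>U. tight_set V E U \<and> nbhd V E v \<subseteq> U \<and> v \<notin> U"
proof -
  have "finite (nbhd V E v)"
    using finite_V nbhd_subset by (rule finite_subset[rotated])
  then have "card (nbhd V E v - {p, q}) = 1"
    using degree3 assms(1-3) by (subst card_Diff_subset) auto
  then obtain r where r: "nbhd V E v - {p, q} = {r}"
    by (rule card_1_singletonE)
  then have N: "nbhd V E v = {p, q, r}" and "r \<noteq> p" "r \<noteq> q"
    using assms(1,2) by auto
  have "r \<in> V" "r \<noteq> v"
    using N nbhd_subset not_in_own_nbhd[of v] by blast+
  obtain T where T: "tight_set V E T" "p \<in> T" "q \<in> T" "v \<notin> T"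
    using nonedges_tight assms by blast
  consider (contains) "r \<in> T"
    | (nonadjacent) a where "a \<in> {p, q}" "{a, r} \<notin> E"
    | (adjacent) "r \<notin> T" "{p, r} \<in> E" "{q, r} \<in> E"
    by blast
  then show ?thesis
  proof cases
    case contains
    then show ?thesis
      using T N by (intro exI[of _ T]) simp
  next
    case (nonadjacent a)
    then have "a \<in> nbhd V E v" "r \<in> nbhd V E v" "a \<noteq> r"
      using N \<open>r \<noteq> p\<close> \<open>r \<noteq> q\<close> by auto
    then obtain T' where "tight_set V E T'" "a \<in> T'" "r \<in> T'" "v \<notin> T'"
      using nonedges_tight nonadjacent(2) by blast
    then show ?thesis
      using tight_set_Un[OF T(1)] T nonadjacent(1) N by (intro exI[of _ "T \<union> T'"]) auto
  next
    case adjacent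
    have "p \<in> V" "q \<in> V"
      using N nbhd_subset by blast+
    then have "{p, q} \<subseteq> T \<inter> nbhd V E r"
      using T(2,3) adjacent(2,3) unfolding nbhd_def by (simp add: insert_commute)
    moreover have "finite (T \<inter> nbhd V E r)"
      using finite_subset[OF nbhd_subset finite_V] by simp
    ultimately have "card {p, q} \<le> card (T \<inter> nbhd V E r)"
      by (simp add: card_mono)
    then have "2 \<le> card (T \<inter> nbhd V E r)"
      using assms(3) by simp
    then show ?thesis
      using tight_set_insert[OF T(1) \<open>r \<in> V\<close> adjacent(1)] T N \<open>r \<noteq> v\<close>
      by (intro exI[of _ "insert r T"]) auto
  qed
qed

lemma induced_K4_if_nonedges_tight:
  assumes "v \<in> V"
  shows "induced_K4 E (nbhd V E v \<union> {v})"
proof (rule ccontr)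
  have "finite (nbhd V E v)"
    using finite_V nbhd_subset by (rule finite_subset[rotated])
  then have "card (nbhd V E v \<union> {v}) = 4"
    using degree3 not_in_own_nbhd by simp
  moreover assume "\<not> induced_K4 E (nbhd V E v \<union> {v})"
  moreover have "{a, v} \<in> E" "{v, a} \<in> E" if "a \<in> nbhd V E v" for a
    using that unfolding nbhd_def by (auto simp: insert_commute)
  ultimately obtain p q where "p \<in> nbhd V E v" "q \<in> nbhd V E v" "p \<noteq> q" "{p, q} \<notin> E"
    unfolding induced_K4_def by blast
  then obtain U where U: "tight_set V E U" "nbhd V E v \<subseteq> U" "v \<notin> U"
    using tight_set_containing_nbhd by blast
  then have "card (U \<inter> nbhd V E v) = 3"
    using degree3 by (simp add: Int_absorb1)
  then show False
    using card_nbhd_inter_tight_set[OF U(1) assms U(3)] by simp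
qed

end

end

locale z2_graph =
  fixes V :: "'a set" and E :: "'a set set" and \<theta> :: "'a \<Rightarrow> 'a"
  assumes z2: "z2_symmetric V E \<theta>"
begin

sublocale graph V E
  using z2 unfolding z2_symmetric_def by unfold_locales blast

lemma theta_in_V: "u \<in> V \<Longrightarrow> \<theta> u \<in> V"
  using z2 unfolding z2_symmetric_def by blast

lemma theta_theta: "u \<in> V \<Longrightarrow> \<theta> (\<theta> u) = u"
  using z2 unfolding z2_symmetric_def by blast

lemma edge_theta_iff: "u \<in> V \<Longrightarrow> w \<in> V \<Longrightarrow> {\<theta> u, \<theta> w} \<in> E \<longleftrightarrow> {u, w} \<in> E"
  using z2 unfolding z2_symmetric_def by blast

lemma inj_on_theta: "inj_on \<theta> V"
  by (metis inj_onI theta_theta)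

lemma theta_doubleton_eq_iff:
  assumes "a \<in> V" "b \<in> V" "c \<in> V" "d \<in> V"
  shows "{\<theta> a, \<theta> b} = {\<theta> c, \<theta> d} \<longleftrightarrow> {a, b} = {c, d}"
  using assms inj_on_theta by (auto simp: doubleton_eq_iff inj_on_eq_iff)

lemma image_theta_theta: "X \<subseteq> V \<Longrightarrow> \<theta> ` \<theta> ` X = X"
  by (simp add: image_image theta_theta subset_iff cong: image_cong)

lemma card_image_theta: "X \<subseteq> V \<Longrightarrow> card (\<theta> ` X) = card X"
  by (meson card_image inj_on_subset inj_on_theta)

lemma image_theta_edge:
  assumes "e \<in> E"
  shows "\<theta> ` e \<in> E"
proof -
  obtain a b where "a \<in> V" "b \<in> V" "e = {a, b}"
    using assms by (rule edgeE)
  then show ?thesis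
    using assms edge_theta_iff by simp
qed

lemma induced_edges_image_theta:
  assumes "X \<subseteq> V"
  shows "induced_edges E (\<theta> ` X) = image \<theta> ` induced_edges E X"
proof
  show "image \<theta> ` induced_edges E X \<subseteq> induced_edges E (\<theta> ` X)"
    unfolding induced_edges_def using image_theta_edge by auto
  show "induced_edges E (\<theta> ` X) \<subseteq> image \<theta> ` induced_edges E X"
  proof
    fix f assume "f \<in> induced_edges E (\<theta> ` X)"
    then have "f \<in> E" "\<theta> ` f \<subseteq> \<theta> ` \<theta> ` X"
      unfolding induced_edges_def by auto
    then have "f \<in> E" "\<theta> ` f \<subseteq> X"
      using image_theta_theta[OF assms] by simp_all
    then have "\<theta> ` f \<in> induced_edges E X" "f = \<theta> ` \<theta> ` f"
      using image_theta_edge image_theta_theta edge_subset unfolding induced_edges_def by auto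
    then show "f \<in> image \<theta> ` induced_edges E X"
      by blast
  qed
qed

lemma card_induced_edges_image_theta:
  assumes "X \<subseteq> V"
  shows "card (induced_edges E (\<theta> ` X)) = card (induced_edges E X)"
proof -
  have "inj_on (image \<theta>) (induced_edges E X)"
    using image_theta_theta edge_subset unfolding induced_edges_def by (metis (lifting) inj_onI mem_Collect_eq)
  then show ?thesis
    by (simp add: induced_edges_image_theta[OF assms] card_image)
qed

lemma tight_set_image_theta:
  assumes "tight_set V E T"
  shows "tight_set V E (\<theta> ` T)"
  using assms theta_in_V card_image_theta card_induced_edges_image_theta
  unfolding tight_set_def by auto

lemma nbhd_theta:
  assumes "w \<in> V"
  shows "nbhd V E (\<theta> w) = \<theta> ` nbhd V E w"
proof
  show "\<theta> ` nbhd V E w \<subseteq> nbhd V E (\<theta> w)"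
    unfolding nbhd_def using assms theta_in_V edge_theta_iff by auto
  show "nbhd V E (\<theta> w) \<subseteq> \<theta> ` nbhd V E w"
  proof
    fix u assume "u \<in> nbhd V E (\<theta> w)"
    then have "\<theta> u \<in> nbhd V E w" "u = \<theta> (\<theta> u)"
      using assms theta_in_V edge_theta_iff[of "\<theta> w" u] theta_theta unfolding nbhd_def by auto
    then show "u \<in> \<theta> ` nbhd V E w"
      by blast
  qed
qed

lemma even_card_induced_edges:
  assumes "\<And>e. e \<in> E \<Longrightarrow> \<theta> ` e \<noteq> e" "X \<subseteq> V" "\<theta> ` X = X"
  shows "even (card (induced_edges E X))"
proof (rule even_card_if_fixpoint_free_involution[where g = "image \<theta>"])
  fix e assume "e \<in> induced_edges E X"
  then have "e \<in> E" "e \<subseteq> X"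
    unfolding induced_edges_def by auto
  then show "\<theta> ` e \<in> induced_edges E X" "\<theta> ` \<theta> ` e = e" "\<theta> ` e \<noteq> e"
    using image_theta_edge image_mono[of e X \<theta>] assms edge_subset image_theta_theta
    unfolding induced_edges_def by auto
qed (rule finite_induced_edges)

end

locale sparse22_z2_graph = z2_graph + sparse22_graph V E +
  assumes no_fixed_edge: "e \<in> E \<Longrightarrow> \<theta> ` e \<noteq> e"
begin

lemma tight_set_if_invariant_near_tight:
  assumes "X \<subseteq> V" "X \<noteq> {}" "\<theta> ` X = X"
    and "2 * int (card X) - 3 \<le> int (card (induced_edges E X))"
  shows "tight_set V E X"
proof (rule tight_setI[OF assms(1,2)])
  obtain k where "card (induced_edges E X) = 2 * k"
    using even_card_induced_edges[OF no_fixed_edge assms(1,3)] by blast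
  then show "2 * int (card X) - 2 \<le> int (card (induced_edges E X))"
    using assms(4) card_induced_edges_le[OF assms(1,2)] by presburger
qed

lemma tight_set_from_near_tight_pair:
  assumes "X \<subseteq> V" "x \<in> X \<inter> \<theta> ` X" "y \<in> X \<inter> \<theta> ` X"
    and "2 * int (card X) - 3 \<le> int (card (induced_edges E X))"
  shows "\<exists>T \<subseteq> X \<union> \<theta> ` X. tight_set V E T \<and> x \<in> T \<and> y \<in> T"
proof (cases "2 * int (card (X \<inter> \<theta> ` X)) - 2 \<le> int (card (induced_edges E (X \<inter> \<theta> ` X)))")
  case True
  moreover have "X \<inter> \<theta> ` X \<subseteq> V" "X \<inter> \<theta> ` X \<noteq> {}"
    using assms(1,2) by auto
  ultimately have "tight_set V E (X \<inter> \<theta> ` X)"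
    by (intro tight_setI)
  then show ?thesis
    using assms(2,3) by (intro exI[of _ "X \<inter> \<theta> ` X"]) auto
next
  case False
  let ?Y = "\<theta> ` X"
  have "?Y \<subseteq> V"
    using assms(1) theta_in_V by auto
  then have "finite X" "finite ?Y"
    using assms(1) finite_subset[OF _ finite_V] by auto
  then have "card X + card ?Y = card (X \<union> ?Y) + card (X \<inter> ?Y)"
    by (rule card_Un_Int)
  moreover have "card ?Y = card X" "card (induced_edges E ?Y) = card (induced_edges E X)"
    using card_image_theta card_induced_edges_image_theta assms(1) by auto
  moreover note card_induced_edges_Un_Int[of X ?Y]
  ultimately have "2 * int (card (X \<union> ?Y)) - 3 \<le> int (card (induced_edges E (X \<union> ?Y)))"
    using assms(4) False by linarith
  moreover have "\<theta> ` (X \<union> ?Y) = X \<union> ?Y"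
    using image_theta_theta[OF assms(1)] by (auto simp: image_Un)
  moreover have "X \<union> ?Y \<subseteq> V" "X \<union> ?Y \<noteq> {}"
    using \<open>?Y \<subseteq> V\<close> assms(1,2) by auto
  ultimately have "tight_set V E (X \<union> ?Y)"
    by (intro tight_set_if_invariant_near_tight)
  then show ?thesis
    using assms(2,3) by (intro exI[of _ "X \<union> ?Y"]) auto
qed

lemma tight_set_if_edge_pair_violates_sparsity:
  assumes "x \<in> V" "y \<in> V" "X \<subseteq> V" "X \<noteq> {}"
    and violation: "2 * int (card X) - 2
      < int (card (induced_edges (insert {x, y} (insert {\<theta> x, \<theta> y} E)) X))"
  shows "\<exists>T \<subseteq> X \<union> \<theta> ` X. tight_set V E T \<and> x \<in> T \<and> y \<in> T"
proof -
  let ?k = "int (card (induced_edges E X))"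
  have "int (card (induced_edges (insert {x, y} (insert {\<theta> x, \<theta> y} E)) X))
      \<le> ?k + (if {x, y} \<subseteq> X then 1 else 0) + (if {\<theta> x, \<theta> y} \<subseteq> X then 1 else 0)"
    by (simp add: induced_edges_insert finite_induced_edges card_insert_if)
  moreover have "?k \<le> 2 * int (card X) - 2"
    using card_induced_edges_le[OF assms(3,4)] .
  ultimately consider
      (pair) "{x, y} \<subseteq> X" "2 * int (card X) - 2 \<le> ?k"
    | (image) "{\<theta> x, \<theta> y} \<subseteq> X" "2 * int (card X) - 2 \<le> ?k"
    | (both) "{x, y} \<subseteq> X" "{\<theta> x, \<theta> y} \<subseteq> X" "2 * int (card X) - 3 \<le> ?k"
    using violation by (cases "{x, y} \<subseteq> X"; cases "{\<theta> x, \<theta> y} \<subseteq> X") auto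
  then show ?thesis
  proof cases
    case pair
    then show ?thesis
      using tight_setI[OF assms(3,4)] by blast
  next
    case image
    then have "tight_set V E (\<theta> ` X)" "x \<in> \<theta> ` X" "y \<in> \<theta> ` X"
      using tight_set_image_theta tight_setI[OF assms(3,4)] theta_theta assms(1,2)
      by (auto intro: rev_image_eqI)
    then show ?thesis
      by blast
  next
    case both
    then have "x \<in> X \<inter> \<theta> ` X" "y \<in> X \<inter> \<theta> ` X"
      using theta_theta assms(1,2) by (auto intro: rev_image_eqI)
    then show ?thesis
      using tight_set_from_near_tight_pair assms(3) both(3) by blast
  qed
qed

context
  fixes v :: 'a
  assumes v: "v \<in> V"
    and degree3: "card (nbhd V E v) = 3"
    and disjoint: "nbhd V E v \<inter> nbhd V E (\<theta> v) = {}"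
begin

lemma theta_not_in_nbhd: "u \<in> nbhd V E v \<Longrightarrow> \<theta> u \<notin> nbhd V E v"
  using disjoint nbhd_theta[OF v] by blast

lemma theta_v_not_in_nbhd: "\<theta> v \<notin> nbhd V E v"
proof
  assume "\<theta> v \<in> nbhd V E v"
  then have "{v, \<theta> v} \<in> E"
    unfolding nbhd_def by simp
  moreover have "\<theta> ` {v, \<theta> v} = {v, \<theta> v}"
    using theta_theta[OF v] by auto
  ultimately show False
    using no_fixed_edge by blast
qed

lemma theta_v_ne_v: "\<theta> v \<noteq> v"
  using disjoint degree3 by auto

lemma theta_in_red_V: "u \<in> red_V V \<theta> v \<Longrightarrow> \<theta> u \<in> red_V V \<theta> v"
  unfolding red_V_def using theta_in_V theta_theta v by (metis Diff_iff insert_iff singletonD)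

lemma card_red_V: "int (card (red_V V \<theta> v)) = int (card V) - 2"
proof -
  have sub: "{v, \<theta> v} \<subseteq> V"
    using v theta_in_V by auto
  have "card {v, \<theta> v} = 2"
    using theta_v_ne_v by simp
  moreover have "card {v, \<theta> v} \<le> card V"
    by (rule card_mono[OF finite_V sub])
  ultimately show ?thesis
    unfolding red_V_def by (simp add: card_Diff_subset[OF _ sub] of_nat_diff)
qed

lemma card_edges_avoiding: "int (card {e \<in> E. v \<notin> e \<and> \<theta> v \<notin> e}) = int (card E) - 6"
proof -
  let ?A = "{e \<in> E. v \<in> e}" and ?B = "{e \<in> E. \<theta> v \<in> e}"
  have "card ?A = 3"
    using card_incident_edges degree3 by simp
  moreover have "card ?B = 3"
    using card_incident_edges nbhd_theta[OF v] card_image_theta[OF nbhd_subset] degree3 by simp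
  moreover have "?A \<inter> ?B = {}"
  proof (rule ccontr)
    assume "?A \<inter> ?B \<noteq> {}"
    then obtain e where e: "e \<in> E" "v \<in> e" "\<theta> v \<in> e"
      by blast
    then obtain a b where "e = {a, b}"
      by (blast elim: edgeE)
    then have "e = {v, \<theta> v}"
      using e theta_v_ne_v by auto
    then have "{v, \<theta> v} \<in> E"
      using e(1) by simp
    then show False
      using theta_v_not_in_nbhd theta_in_V[OF v] unfolding nbhd_def by simp
  qed
  ultimately have "card (?A \<union> ?B) = 6"
    using finite_E by (simp add: card_Un_disjoint)
  moreover have "{e \<in> E. v \<notin> e \<and> \<theta> v \<notin> e} = E - (?A \<union> ?B)"
    by auto
  moreover have "card (?A \<union> ?B) \<le> card E"
    using finite_E by (intro card_mono) auto
  ultimately show ?thesis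
    using finite_E by (simp add: card_Diff_subset)
qed

context
  fixes x y :: 'a
  assumes x: "x \<in> nbhd V E v" and y: "y \<in> nbhd V E v"
    and x_ne_y: "x \<noteq> y" and nonedge: "{x, y} \<notin> E"
begin

lemma pair_in_V: "x \<in> V" "y \<in> V" "\<theta> x \<in> V" "\<theta> y \<in> V"
  using x y nbhd_subset theta_in_V by blast+

lemma pair_in_red_V: "x \<in> red_V V \<theta> v" "y \<in> red_V V \<theta> v"
  using x y pair_in_V not_in_own_nbhd theta_v_not_in_nbhd unfolding red_V_def by auto

lemma theta_pair_nonedge: "{\<theta> x, \<theta> y} \<notin> E"
  using nonedge edge_theta_iff pair_in_V by simp

lemma pair_not_in_theta_pair: "x \<notin> {\<theta> x, \<theta> y}" "y \<notin> {\<theta> x, \<theta> y}"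
  using x y theta_not_in_nbhd[OF x] theta_not_in_nbhd[OF y] by auto

lemma doubleton_in_red_E_iff:
  assumes "u \<in> red_V V \<theta> v" "w \<in> red_V V \<theta> v"
  shows "{u, w} \<in> red_E E \<theta> v x y \<longleftrightarrow> {u, w} \<in> E \<or> {u, w} = {x, y} \<or> {u, w} = {\<theta> x, \<theta> y}"
  using assms unfolding red_E_def red_V_def by auto

lemma simple_graph_reduction: "simple_graph (red_V V \<theta> v) (red_E E \<theta> v x y)"
  unfolding simple_graph_def
proof (intro conjI ballI)
  show "finite (red_V V \<theta> v)"
    unfolding red_V_def using finite_V by simp
  fix e assume e: "e \<in> red_E E \<theta> v x y"
  have "\<theta> x \<noteq> \<theta> y"
    using x_ne_y pair_in_V theta_theta by metis
  moreover have "\<theta> x \<in> red_V V \<theta> v" "\<theta> y \<in> red_V V \<theta> v"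
    using pair_in_red_V theta_in_red_V by auto
  moreover have "\<exists>a b. a \<noteq> b \<and> a \<in> red_V V \<theta> v \<and> b \<in> red_V V \<theta> v \<and> e = {a, b}"
    if "e \<in> E" "v \<notin> e" "\<theta> v \<notin> e"
    using that unfolding red_V_def by (auto elim!: edgeE)
  ultimately show "\<exists>a b. a \<noteq> b \<and> a \<in> red_V V \<theta> v \<and> b \<in> red_V V \<theta> v \<and> e = {a, b}"
    using e x_ne_y pair_in_red_V unfolding red_E_def by blast
qed

lemma z2_symmetric_reduction: "z2_symmetric (red_V V \<theta> v) (red_E E \<theta> v x y) \<theta>"
  unfolding z2_symmetric_def
proof (intro conjI ballI simple_graph_reduction)
  fix u assume u: "u \<in> red_V V \<theta> v"
  then show "\<theta> u \<in> red_V V \<theta> v"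
    by (rule theta_in_red_V)
  show "\<theta> (\<theta> u) = u"
    using u theta_theta unfolding red_V_def by simp
next
  fix u w assume u: "u \<in> red_V V \<theta> v" and w: "w \<in> red_V V \<theta> v"
  then have "u \<in> V" "w \<in> V"
    unfolding red_V_def by auto
  then have "{\<theta> u, \<theta> w} \<in> E \<longleftrightarrow> {u, w} \<in> E"
    and "{\<theta> u, \<theta> w} = {\<theta> x, \<theta> y} \<longleftrightarrow> {u, w} = {x, y}"
    and "{\<theta> u, \<theta> w} = {x, y} \<longleftrightarrow> {u, w} = {\<theta> x, \<theta> y}"
    using edge_theta_iff theta_doubleton_eq_iff[of u w "\<theta> x" "\<theta> y"] theta_doubleton_eq_iff[of u w x y]
      theta_theta pair_in_V by simp_all
  moreover note doubleton_in_red_E_iff[OF u w]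
    doubleton_in_red_E_iff[OF theta_in_red_V[OF u] theta_in_red_V[OF w]]
  ultimately show "{u, w} \<in> red_E E \<theta> v x y \<longleftrightarrow> {\<theta> u, \<theta> w} \<in> red_E E \<theta> v x y"
    by argo
qed

lemma reduction_no_fixed_edge: "e \<in> red_E E \<theta> v x y \<Longrightarrow> \<theta> ` e \<noteq> e"
  using no_fixed_edge pair_not_in_theta_pair theta_theta pair_in_V unfolding red_E_def by auto

lemma card_red_E: "int (card (red_E E \<theta> v x y)) = int (card E) - 4"
proof -
  have "{x, y} \<noteq> {\<theta> x, \<theta> y}"
    using pair_not_in_theta_pair by auto
  then have "card {{x, y}, {\<theta> x, \<theta> y}} = 2"
    by simp
  moreover have "card (red_E E \<theta> v x y)
      = card {e \<in> E. v \<notin> e \<and> \<theta> v \<notin> e} + card {{x, y}, {\<theta> x, \<theta> y}}"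
    unfolding red_E_def by (rule card_Un_disjoint) (use finite_E nonedge theta_pair_nonedge in auto)
  ultimately show ?thesis
    using card_edges_avoiding by simp
qed

lemma sparse22_reduction_or_tight_set:
  "sparse22 (red_V V \<theta> v) (red_E E \<theta> v x y) \<or> (\<exists>T. tight_set V E T \<and> x \<in> T \<and> y \<in> T \<and> v \<notin> T)"
proof (cases "sparse22 (red_V V \<theta> v) (red_E E \<theta> v x y)")
  case False
  then have "\<exists>X F. X \<subseteq> red_V V \<theta> v \<and> X \<noteq> {} \<and> F \<subseteq> red_E E \<theta> v x y \<and> (\<forall>e\<in>F. e \<subseteq> X)
      \<and> 2 * int (card X) - 2 < int (card F)"
    unfolding sparse22_def by (simp add: not_le)
  then obtain X F where X: "X \<subseteq> red_V V \<theta> v" "X \<noteq> {}" and F: "F \<subseteq> red_E E \<theta> v x y"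
    "\<forall>e\<in>F. e \<subseteq> X" "2 * int (card X) - 2 < int (card F)"
    by blast
  have "F \<subseteq> induced_edges (insert {x, y} (insert {\<theta> x, \<theta> y} E)) X"
    using F(1,2) unfolding red_E_def induced_edges_def by auto
  moreover have "finite (induced_edges (insert {x, y} (insert {\<theta> x, \<theta> y} E)) X)"
    using finite_E unfolding induced_edges_def by simp
  ultimately have "card F \<le> card (induced_edges (insert {x, y} (insert {\<theta> x, \<theta> y} E)) X)"
    by (simp add: card_mono)
  then have "2 * int (card X) - 2
      < int (card (induced_edges (insert {x, y} (insert {\<theta> x, \<theta> y} E)) X))"
    using F(3) by linarith
  moreover have "X \<subseteq> V"
    using X(1) unfolding red_V_def by auto
  ultimately obtain T where T: "T \<subseteq> X \<union> \<theta> ` X" "tight_set V E T" "x \<in> T" "y \<in> T"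
    using tight_set_if_edge_pair_violates_sparsity[OF pair_in_V(1,2) _ X(2)] by blast
  have "X \<union> \<theta> ` X \<subseteq> red_V V \<theta> v"
    using X(1) theta_in_red_V by blast
  then have "v \<notin> T"
    using T(1) unfolding red_V_def by blast
  then show ?thesis
    using T by blast
qed simp

lemma Ci_tight22_reduction_or_tight_set:
  assumes "\<And>u. u \<in> V \<Longrightarrow> \<theta> u \<noteq> u" and "int (card E) = 2 * int (card V) - 2"
  shows "Ci_tight22 (red_V V \<theta> v) (red_E E \<theta> v x y) \<theta>
    \<or> (\<exists>T. tight_set V E T \<and> x \<in> T \<and> y \<in> T \<and> v \<notin> T)"
proof -
  have "int (card (red_E E \<theta> v x y)) = 2 * int (card (red_V V \<theta> v)) - 2"
    using card_red_E card_red_V assms(2) by linarith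
  moreover have "\<forall>u\<in>red_V V \<theta> v. \<theta> u \<noteq> u"
    using assms(1) unfolding red_V_def by blast
  ultimately show ?thesis
    using sparse22_reduction_or_tight_set z2_symmetric_reduction reduction_no_fixed_edge
    unfolding Ci_tight22_def tight22_def by blast
qed

end

end

end

lemma sparse22_z2_graph_if_Ci_tight22:
  assumes "Ci_tight22 V E \<theta>"
  shows "sparse22_z2_graph V E \<theta>"
proof -
  have "z2_symmetric V E \<theta>" "sparse22 V E" "\<forall>e\<in>E. \<theta> ` e \<noteq> e"
    using assms unfolding Ci_tight22_def tight22_def by auto
  moreover have "simple_graph V E"
    using \<open>z2_symmetric V E \<theta>\<close> unfolding z2_symmetric_def by (rule conjunct1)
  ultimately show ?thesis
    by unfold_locales simp_all
qed

theorem lemma5p4: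
  fixes V :: "'a set" and E :: "'a set set" and \<theta> :: "'a \<Rightarrow> 'a" and v :: 'a
  assumes "Ci_tight22 V E \<theta>"
    and "v \<in> V"
    and "card (nbhd V E v) = 3"
    and "nbhd V E v \<inter> nbhd V E (\<theta> v) = {}"
  shows "induced_K4 E (nbhd V E v \<union> {v}) \<or>
         (\<exists>x\<in>nbhd V E v. \<exists>y\<in>nbhd V E v. x \<noteq> y \<and> {x, y} \<notin> E \<and>
            Ci_tight22 (red_V V \<theta> v) (red_E E \<theta> v x y) \<theta>)"
proof (rule disjCI)
  interpret sparse22_z2_graph V E \<theta>
    using assms(1) by (rule sparse22_z2_graph_if_Ci_tight22)
  have no_fixed_vertex: "\<And>u. u \<in> V \<Longrightarrow> \<theta> u \<noteq> u"
    and card_E: "int (card E) = 2 * int (card V) - 2"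
    using assms(1) unfolding Ci_tight22_def tight22_def by auto
  assume no_reduction: "\<not> (\<exists>x\<in>nbhd V E v. \<exists>y\<in>nbhd V E v. x \<noteq> y \<and> {x, y} \<notin> E \<and>
      Ci_tight22 (red_V V \<theta> v) (red_E E \<theta> v x y) \<theta>)"
  have "\<exists>T. tight_set V E T \<and> x \<in> T \<and> y \<in> T \<and> v \<notin> T"
    if "x \<in> nbhd V E v" "y \<in> nbhd V E v" "x \<noteq> y" "{x, y} \<notin> E" for x y
    using Ci_tight22_reduction_or_tight_set[OF assms(2-4) that no_fixed_vertex card_E]
      no_reduction that by blast
  then show "induced_K4 E (nbhd V E v \<union> {v})"
    by (rule induced_K4_if_nonedges_tight[OF assms(3) _ assms(2)])
qed

end
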